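(* Let $p\ge 1$, let $n_1,\dots,n_p\ge1$ and $k_s\in[n_s]$ for each $s$. If $\mathcal{F}\subseteq\prod_{s}\binom{[n_s]}{k_s}$ is intersecting and shifted, then $P(F)\cap P(G)\neq\emptyset$ for any $F,G\in \mathcal{F}$.
   Context: Multi-part setting: the ground set is the disjoint union $\bigsqcup_{s=1}^p [n_s]$ of $p$ parts, $[n]=\{1,\dots,n\}$. For $F_s\subseteq[n_s]$, $\bigsqcup_s F_s$ denotes the subset having $F_s$ in part $s$; $\prod_{s}\binom{[n_s]}{k_s}$ is the collection of all $\bigsqcup_s F_s$ with $|F_s|=k_s$ for all $s$. A family is intersecting if any two of its sets intersect (in some part). Shifting: for $t\in[p]$, $1\le i<j\le n_t$ and $F=\bigsqcup_s F_s$, $S_t^{i,j}(F)=F$ if $i\in F_t$ or $j\notin F_t$, and otherwise $S_t^{i,j}(F)$ replaces $F_t$ by $(F_t\setminus\{j\})\cup\{i\}$. For a family, $S_t^{i,j}(\mathcal F)=\{S_t^{i,j}(F):F\in\mathcal F\}\cup\{F: F\in\mathcal F,\ S_t^{i,j}(F)\in\mathcal F\}$. $\mathcal F$ is shifted if $S_t^{i,j}(\mathcal F)=\mathcal F$ for all $t\in[p]$ and all $1\le i<j\le n_t$. Projection: for $F=\bigsqcup_s F_s$, let $P_s(F)=F_s\cap[2k_s]$ and $P(F)=\bigsqcup_s P_s(F)$ (the first $2k_s$ elements of each part $s$ that lie in $F$). *)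

theory Defs
  imports Main
begin

text \<open>A subset of the disjoint union of parts [n_1],...,[n_p] is represented as a set of
pairs (s, x) meaning element x of part s.\<close>

definition ground :: "nat \<Rightarrow> (nat \<Rightarrow> nat) \<Rightarrow> (nat \<times> nat) set" where
  "ground p n = {(s, x). s \<in> {1..p} \<and> x \<in> {1..n s}}"

definition part :: "(nat \<times> nat) set \<Rightarrow> nat \<Rightarrow> nat set" where
  "part F s = {x. (s, x) \<in> F}"

definition prod_family :: "nat \<Rightarrow> (nat \<Rightarrow> nat) \<Rightarrow> (nat \<Rightarrow> nat) \<Rightarrow> (nat \<times> nat) set set" where
  "prod_family p n k = {F. F \<subseteq> ground p n \<and> (\<forall>s\<in>{1..p}. card (part F s) = k s)}"

definition intersecting :: "(nat \<times> nat) set set \<Rightarrow> bool" where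
  "intersecting \<F> \<longleftrightarrow> (\<forall>F\<in>\<F>. \<forall>G\<in>\<F>. F \<inter> G \<noteq> {})"

definition shift :: "nat \<Rightarrow> nat \<Rightarrow> nat \<Rightarrow> (nat \<times> nat) set \<Rightarrow> (nat \<times> nat) set" where
  "shift t i j F = (if i \<in> part F t \<or> j \<notin> part F t then F
                    else (F - {(t, j)}) \<union> {(t, i)})"

definition shift_family :: "nat \<Rightarrow> nat \<Rightarrow> nat \<Rightarrow> (nat \<times> nat) set set \<Rightarrow> (nat \<times> nat) set set" where
  "shift_family t i j \<F> = shift t i j ` \<F> \<union> {F \<in> \<F>. shift t i j F \<in> \<F>}"

definition shifted :: "nat \<Rightarrow> (nat \<Rightarrow> nat) \<Rightarrow> (nat \<times> nat) set set \<Rightarrow> bool" where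
  "shifted p n \<F> \<longleftrightarrow>
     (\<forall>t\<in>{1..p}. \<forall>i j. 1 \<le> i \<and> i < j \<and> j \<le> n t \<longrightarrow> shift_family t i j \<F> = \<F>)"

definition proj :: "(nat \<Rightarrow> nat) \<Rightarrow> (nat \<times> nat) set \<Rightarrow> (nat \<times> nat) set" where
  "proj k F = {(s, x) \<in> F. x \<le> 2 * k s}"

end

theory Submission
  imports Defs
begin

text \<open>Suppose F, G \<in> \<F> have disjoint projections. Being intersecting, they share some (t, j), and
  necessarily j > 2 k_t. Each of F_t, G_t has at most k_t - 1 elements in [2 k_t], so some
  i \<le> 2 k_t lies in neither. Shiftedness puts G' = S_t^{i,j}(G) into \<F>; its projection is still
  disjoint from that of F, while F \<inter> G' = (F \<inter> G) - {(t, j)}. Iterating empties F \<inter> G,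
  contradicting intersection.\<close>

lemma finite_ground: "finite (ground p n)"
proof (rule finite_subset)
  show "ground p n \<subseteq> {1..p} \<times> (\<Union>s\<in>{1..p}. {1..n s})"
    unfolding ground_def by auto
qed simp

lemma finite_part: "finite F \<Longrightarrow> finite (part F s)"
  by (rule finite_subset[of _ "snd ` F"]) (force simp: part_def)+

lemma card_inter_initial_segment_le:
  fixes X :: "nat set"
  assumes "finite X" "j \<in> X" "m < j"
  shows "card (X \<inter> {1..m}) \<le> card X - 1"
proof -
  have "X \<inter> {1..m} \<subseteq> X - {j}" using assms(3) by auto
  then show ?thesis
    using card_mono[of "X - {j}"] assms(1,2) by simp
qed

lemma common_gap_below:
  fixes X Y :: "nat set"
  assumes "finite X" "finite Y" "card X \<le> k" "card Y \<le> k"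
    and "j \<in> X" "j \<in> Y" "2 * k < j"
  shows "\<exists>i\<in>{1..2 * k}. i \<notin> X \<and> i \<notin> Y"
proof (rule ccontr)
  assume "\<not> ?thesis"
  then have cover: "{1..2 * k} \<subseteq> (X \<inter> {1..2 * k}) \<union> (Y \<inter> {1..2 * k})" by auto
  have "card X \<noteq> 0" using assms(1,5) by auto
  have "2 * k = card {1..2 * k}" by simp
  also have "\<dots> \<le> card ((X \<inter> {1..2 * k}) \<union> (Y \<inter> {1..2 * k}))"
    using cover assms(1) by (intro card_mono) auto
  also have "\<dots> \<le> card (X \<inter> {1..2 * k}) + card (Y \<inter> {1..2 * k})"
    by (rule card_Un_le)
  also have "\<dots> \<le> (card X - 1) + (card Y - 1)"
    using assms by (intro add_mono card_inter_initial_segment_le) auto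
  finally show False using \<open>card X \<noteq> 0\<close> assms(3,4) by linarith
qed

lemma shift_swap:
  assumes "i \<notin> part G t" "j \<in> part G t"
  shows "shift t i j G = insert (t, i) (G - {(t, j)})"
  using assms unfolding shift_def by auto

lemma shifted_shift_mem:
  assumes "shifted p n \<F>" "G \<in> \<F>" "t \<in> {1..p}" "1 \<le> i" "i < j" "j \<le> n t"
  shows "shift t i j G \<in> \<F>"
proof -
  have "shift t i j G \<in> shift_family t i j \<F>"
    unfolding shift_family_def using assms(2) by auto
  then show ?thesis using assms unfolding shifted_def by auto
qed

lemma shift_shrinks_intersection:
  assumes "\<F> \<subseteq> prod_family p n k" "intersecting \<F>" "shifted p n \<F>"
    and F: "F \<in> \<F>" and G: "G \<in> \<F>" and disj: "proj k F \<inter> proj k G = {}"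
  obtains G' where "G' \<in> \<F>" "proj k F \<inter> proj k G' = {}" "card (F \<inter> G') < card (F \<inter> G)"
proof -
  have ground: "F \<subseteq> ground p n" "G \<subseteq> ground p n"
    and card_part: "\<forall>s\<in>{1..p}. card (part F s) = k s" "\<forall>s\<in>{1..p}. card (part G s) = k s"
    using assms(1) F G unfolding prod_family_def by auto
  have fin: "finite F" "finite G"
    using ground finite_ground by (auto intro: finite_subset)
  have "F \<inter> G \<noteq> {}" using assms(2) F G unfolding intersecting_def by blast
  then obtain t j where tj: "(t, j) \<in> F" "(t, j) \<in> G" by auto
  have t: "t \<in> {1..p}" and "j \<le> n t"
    using tj ground unfolding ground_def by auto
  have "j > 2 * k t"
  proof (rule ccontr)
    assume "\<not> j > 2 * k t"
    then have "(t, j) \<in> proj k F \<inter> proj k G" using tj unfolding proj_def by auto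
    then show False using disj by simp
  qed
  moreover have "finite (part F t)" "finite (part G t)"
    using fin finite_part by auto
  moreover have "j \<in> part F t" "j \<in> part G t"
    using tj by (auto simp: part_def)
  ultimately obtain i where i: "i \<in> {1..2 * k t}" "i \<notin> part F t" "i \<notin> part G t"
    using common_gap_below[of "part F t" "part G t" "k t" j] card_part t by auto
  define G' where "G' = shift t i j G"
  have G'_eq: "G' = insert (t, i) (G - {(t, j)})"
    unfolding G'_def using i(3) tj(2) by (intro shift_swap) (auto simp: part_def)
  have "(t, i) \<notin> F" using i(2) by (simp add: part_def)
  then have "proj k F \<inter> proj k G' = {}" and inter: "F \<inter> G' = (F \<inter> G) - {(t, j)}"
    using disj unfolding G'_eq proj_def by auto
  moreover have "G' \<in> \<F>"
    unfolding G'_def using i(1) \<open>j > 2 * k t\<close>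
    by (intro shifted_shift_mem[OF assms(3) G t _ _ \<open>j \<le> n t\<close>]) auto
  moreover have "card (F \<inter> G') < card (F \<inter> G)"
    unfolding inter using fin tj by (intro card_Diff1_less) auto
  ultimately show ?thesis using that by blast
qed

theorem lemma3p1:
  fixes p :: nat and n k :: "nat \<Rightarrow> nat" and \<F> :: "(nat \<times> nat) set set"
  assumes "p \<ge> 1"
    and "\<forall>s\<in>{1..p}. n s \<ge> 1"
    and "\<forall>s\<in>{1..p}. 1 \<le> k s \<and> k s \<le> n s"
    and "\<F> \<subseteq> prod_family p n k"
    and "intersecting \<F>"
    and "shifted p n \<F>"
  shows "\<forall>F\<in>\<F>. \<forall>G\<in>\<F>. proj k F \<inter> proj k G \<noteq> {}"
proof (intro ballI notI)
  fix F G assume F: "F \<in> \<F>" and G: "G \<in> \<F>" and disj: "proj k F \<inter> proj k G = {}"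
  from G disj show False
  proof (induction "card (F \<inter> G)" arbitrary: G rule: less_induct)
    case less
    obtain G' where "G' \<in> \<F>" "proj k F \<inter> proj k G' = {}" "card (F \<inter> G') < card (F \<inter> G)"
      by (rule shift_shrinks_intersection[OF assms(4-6) F less.prems])
    with less.hyps show False by blast
  qed
qed

end
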